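(* For every instance of continuous BGT, every schedule $S$, and every nonempty subset $V'\subseteq V$ of the points, $\mathrm{MH}(S)\ge h_{\min}(V')\cdot \mathrm{MST}(V')$.
   Context: Continuous BGT: bamboos $b_1,\dots,b_n$ located at points $V=\{v_1,\dots,v_n\}$, growth rates $h_1\ge\dots\ge h_n>0$, initial heights $0$; symmetric travel times $t_{i,j}>0$ ($i\ne j$) satisfying the triangle inequality. A robot starts at $v_1$ at time $0$, moves between points taking time $t_{i,j}$ from $v_i$ to $v_j$, and cuts the bamboo at each point it is at, instantaneously, to height $0$. Height of $b_i$ at time $t$ = $h_i$ times the time since its last cut (or since $0$). $\mathrm{MH}(S)$ = supremum of heights over all times. For $V'\subseteq V$, $h_{\min}(V')$ is the minimum growth rate of a bamboo located in $V'$, and $\mathrm{MST}(V')$ is the minimum total weight of a spanning tree on $V'$ with edge weights $t_{i,j}$ ($0$ if $|V'|=1$). *)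

theory Defs
  imports "HOL-Analysis.Analysis"
begin

text \<open>Continuous BGT. Points are indexed 0,...,n-1 (point i corresponds to v_(i+1)).
  h i : growth rate of bamboo at point i; tt i j : travel time between points i and j.\<close>

definition bgt_instance :: "nat \<Rightarrow> (nat \<Rightarrow> real) \<Rightarrow> (nat \<Rightarrow> nat \<Rightarrow> real) \<Rightarrow> bool" where
  "bgt_instance n h tt \<longleftrightarrow>
     n \<ge> 1 \<and>
     (\<forall>i<n. \<forall>j<n. i \<le> j \<longrightarrow> h i \<ge> h j) \<and>
     (\<forall>i<n. h i > 0) \<and>
     (\<forall>i<n. \<forall>j<n. i \<noteq> j \<longrightarrow> tt i j > 0 \<and> tt i j = tt j i) \<and>
     (\<forall>i<n. \<forall>j<n. \<forall>k<n. i \<noteq> j \<and> j \<noteq> k \<and> i \<noteq> k \<longrightarrow> tt i k \<le> tt i j + tt j k)"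

definition schedule :: "nat \<Rightarrow> (nat \<Rightarrow> nat) \<Rightarrow> bool" where
  "schedule n p \<longleftrightarrow> p 0 = 0 \<and> (\<forall>k. p k < n \<and> p (Suc k) \<noteq> p k)"

definition arrival :: "(nat \<Rightarrow> nat \<Rightarrow> real) \<Rightarrow> (nat \<Rightarrow> nat) \<Rightarrow> nat \<Rightarrow> real" where
  "arrival tt p k = (\<Sum>j<k. tt (p j) (p (Suc j)))"

definition last_cut :: "(nat \<Rightarrow> nat \<Rightarrow> real) \<Rightarrow> (nat \<Rightarrow> nat) \<Rightarrow> nat \<Rightarrow> real \<Rightarrow> real" where
  "last_cut tt p i \<tau> = Sup ({arrival tt p k | k. arrival tt p k \<le> \<tau> \<and> p k = i} \<union> {0})"

definition height :: "(nat \<Rightarrow> real) \<Rightarrow> (nat \<Rightarrow> nat \<Rightarrow> real) \<Rightarrow> (nat \<Rightarrow> nat) \<Rightarrow> nat \<Rightarrow> real \<Rightarrow> real" where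
  "height h tt p i \<tau> = h i * (\<tau> - last_cut tt p i \<tau>)"

definition MH :: "nat \<Rightarrow> (nat \<Rightarrow> real) \<Rightarrow> (nat \<Rightarrow> nat \<Rightarrow> real) \<Rightarrow> (nat \<Rightarrow> nat) \<Rightarrow> ereal" where
  "MH n h tt p = (SUP \<tau>\<in>{0::real..}. SUP i\<in>{..<n}. ereal (height h tt p i \<tau>))"

definition spanning_tree :: "nat set \<Rightarrow> (nat \<times> nat) set \<Rightarrow> bool" where
  "spanning_tree W E \<longleftrightarrow>
     E \<subseteq> {(a,b). a \<in> W \<and> b \<in> W \<and> a < b} \<and>
     card E = card W - 1 \<and>
     (\<forall>a\<in>W. \<forall>b\<in>W. (a,b) \<in> (E \<union> E\<inverse>)\<^sup>*)"

definition MST :: "(nat \<Rightarrow> nat \<Rightarrow> real) \<Rightarrow> nat set \<Rightarrow> real" where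
  "MST tt W = Min {(\<Sum>(a,b)\<in>E. tt a b) | E. spanning_tree W E}"

definition h_min :: "(nat \<Rightarrow> real) \<Rightarrow> nat set \<Rightarrow> real" where
  "h_min h W = Min (h ` W)"

end

theory Submission
  imports Defs
begin

text \<open>If no bamboo ever exceeds height X, then at any time \<tau> every point of W was cut during the
  last D = X / h_min(W) time units. Following the schedule from the earliest to the latest of these
  cuts is a walk through all of W of length less than D + \<epsilon>, and by the triangle inequality
  such a walk contains a spanning tree of W that is no longer. Hence MST(W) \<le> X / h_min(W).\<close>

lemma spanning_tree_singleton: "spanning_tree {v} {}"
  unfolding spanning_tree_def by simp

lemma spanning_tree_subset_Times: "spanning_tree W E \<Longrightarrow> E \<subseteq> W \<times> W"
  unfolding spanning_tree_def by auto

lemma finite_spanning_tree: "finite W \<Longrightarrow> spanning_tree W E \<Longrightarrow> finite E"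
  using finite_subset spanning_tree_subset_Times by blast

lemma spanning_tree_insert:
  assumes W: "finite W" and E: "spanning_tree W E" and u: "u \<in> W" and v: "v \<notin> W"
  shows "spanning_tree (insert v W) (insert (min u v, max u v) E)"
  unfolding spanning_tree_def
proof (intro conjI ballI)
  let ?e = "(min u v, max u v)"
  let ?R = "insert ?e E \<union> (insert ?e E)\<inverse>"
  have "u \<noteq> v"
    using u v by blast
  have "?e \<notin> E" "0 < card W"
    using spanning_tree_subset_Times[OF E] u v W by (auto simp: min_def max_def card_gt_0_iff)
  then show "card (insert ?e E) = card (insert v W) - 1"
    using E W v finite_spanning_tree[OF W E] unfolding spanning_tree_def by simp
  show "insert ?e E \<subseteq> {(a, b). a \<in> insert v W \<and> b \<in> insert v W \<and> a < b}"
    using E u v \<open>u \<noteq> v\<close> unfolding spanning_tree_def by (auto simp: min_def max_def)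
  have in_W: "(x, y) \<in> ?R\<^sup>*" if "x \<in> W" "y \<in> W" for x y
    using E that rtrancl_mono[of "E \<union> E\<inverse>" ?R] unfolding spanning_tree_def by blast
  have "(u, v) \<in> ?R" "(v, u) \<in> ?R"
    by (auto simp: min_def max_def)
  then have "(x, v) \<in> ?R\<^sup>*" "(v, x) \<in> ?R\<^sup>*" if "x \<in> W" for x
    using in_W[OF that u] in_W[OF u that]
    by (meson rtrancl.rtrancl_into_rtrancl converse_rtrancl_into_rtrancl)+
  then show "(x, y) \<in> ?R\<^sup>*" if "x \<in> insert v W" "y \<in> insert v W" for x y
    using that in_W by auto
qed

lemma sum_spanning_tree_insert:
  assumes "spanning_tree W E" "finite W" "v \<notin> W"
  shows "(\<Sum>(x, y)\<in>insert (min u v, max u v) E. f x y) = f (min u v) (max u v) + (\<Sum>(x, y)\<in>E. f x y)"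
proof -
  have "(min u v, max u v) \<notin> E"
    using spanning_tree_subset_Times[OF assms(1)] assms(3) by (auto simp: min_def max_def)
  then show ?thesis
    using finite_spanning_tree[OF assms(2,1)] by simp
qed

lemma MST_le:
  assumes "finite W" "spanning_tree W E"
  shows "MST tt W \<le> (\<Sum>(x, y)\<in>E. tt x y)"
proof -
  have "{E. spanning_tree W E} \<subseteq> Pow (W \<times> W)"
    using spanning_tree_subset_Times by blast
  then have "finite {E. spanning_tree W E}"
    using assms(1) finite_subset by blast
  moreover have "{\<Sum>(a, b)\<in>E. tt a b | E. spanning_tree W E} = (\<lambda>E. \<Sum>(a, b)\<in>E. tt a b) ` {E. spanning_tree W E}"
    by auto
  ultimately show ?thesis
    unfolding MST_def using assms(2) by (auto intro: Min_le)
qed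

lemma arrival_Suc: "arrival tt p (Suc k) = arrival tt p k + tt (p k) (p (Suc k))"
  unfolding arrival_def by simp

lemma last_cut_le: "0 \<le> \<tau> \<Longrightarrow> last_cut tt p i \<tau> \<le> \<tau>"
  unfolding last_cut_def by (rule cSup_least) auto

lemma cut_after_less_last_cut:
  assumes "0 \<le> y" "y < last_cut tt p i \<tau>"
  shows "\<exists>k. p k = i \<and> y < arrival tt p k \<and> arrival tt p k \<le> \<tau>"
proof -
  let ?A = "{arrival tt p k | k. arrival tt p k \<le> \<tau> \<and> p k = i} \<union> {0}"
  have "bdd_above ?A"
    by (rule bdd_aboveI[of _ "max 0 \<tau>"]) auto
  then obtain x where "x \<in> ?A" "y < x"
    using assms(2) less_cSup_iff[of ?A y] unfolding last_cut_def by blast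
  then show ?thesis
    using assms(1) by auto
qed

lemma height_le_MH: "0 \<le> \<tau> \<Longrightarrow> i < n \<Longrightarrow> ereal (height h tt p i \<tau>) \<le> MH n h tt p"
  unfolding MH_def by (rule SUP_upper2[of \<tau>]) (auto intro: SUP_upper)

lemma last_visit:
  fixes f :: "nat \<Rightarrow> 'a"
  assumes "W \<subseteq> f ` {a..b}" "W \<noteq> {}"
  obtains c where "c \<in> {a..b}" "f c \<in> W" "W \<subseteq> f ` {a..c}"
proof -
  define J where "J = {j \<in> {a..b}. f j \<in> W}"
  have J: "finite J" "J \<noteq> {}"
    using assms unfolding J_def by auto
  have "W \<subseteq> f ` {a..Max J}"
  proof
    fix x assume "x \<in> W"
    then obtain j where "j \<in> J" "x = f j"
      using assms(1) unfolding J_def by blast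
    then show "x \<in> f ` {a..Max J}"
      using Max_ge[OF J(1)] unfolding J_def by auto
  qed
  then show thesis
    using that Max_in[OF J] unfolding J_def by blast
qed

lemma time_since_cut_le:
  assumes "MH n h tt p \<le> ereal X" "0 \<le> \<tau>" "i < n" "0 < c" "c \<le> h i"
  shows "\<tau> - last_cut tt p i \<tau> \<le> X / c"
proof -
  have "c * (\<tau> - last_cut tt p i \<tau>) \<le> h i * (\<tau> - last_cut tt p i \<tau>)"
    using assms(5) last_cut_le[OF assms(2)] by (simp add: mult_right_mono)
  also have "\<dots> \<le> X"
    using order_trans[OF height_le_MH[OF assms(2,3)] assms(1)] unfolding height_def by simp
  finally show ?thesis
    using assms(4) by (simp add: pos_le_divide_eq mult.commute)
qed

locale metric_walk =
  fixes n :: nat and tt :: "nat \<Rightarrow> nat \<Rightarrow> real" and p :: "nat \<Rightarrow> nat"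
  assumes walk_in: "p j < n"
    and walk_moves: "p (Suc j) \<noteq> p j"
    and tt_pos: "i < n \<Longrightarrow> j < n \<Longrightarrow> i \<noteq> j \<Longrightarrow> 0 < tt i j"
    and tt_sym: "i < n \<Longrightarrow> j < n \<Longrightarrow> i \<noteq> j \<Longrightarrow> tt i j = tt j i"
    and tt_triangle: "i < n \<Longrightarrow> j < n \<Longrightarrow> k < n \<Longrightarrow> i \<noteq> j \<Longrightarrow> j \<noteq> k \<Longrightarrow> i \<noteq> k \<Longrightarrow>
      tt i k \<le> tt i j + tt j k"
begin

lemma arrival_mono: "a \<le> b \<Longrightarrow> arrival tt p a \<le> arrival tt p b"
proof (induction b rule: dec_induct)
  case (step b)
  then show ?case
    using tt_pos[OF walk_in walk_in walk_moves[symmetric], of b] arrival_Suc[of tt p b] by linarith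
qed simp

lemma tt_le_arrival_diff:
  "a \<le> c \<Longrightarrow> p a \<noteq> p c \<Longrightarrow> tt (p a) (p c) \<le> arrival tt p c - arrival tt p a"
proof (induction c rule: dec_induct)
  case (step c)
  show ?case
  proof (cases "p a = p c")
    case True
    then show ?thesis
      using arrival_mono[OF step.hyps(1)] arrival_Suc[of tt p c] by simp
  next
    case False
    then have "tt (p a) (p (Suc c)) \<le> tt (p a) (p c) + tt (p c) (p (Suc c))"
      using tt_triangle[OF walk_in walk_in walk_in] walk_moves step.prems by metis
    then show ?thesis
      using step.IH False arrival_Suc[of tt p c] by linarith
  qed
qed simp

lemma spanning_tree_along_walk:
  assumes "W \<subseteq> p ` {a..b}" "W \<noteq> {}"
  shows "\<exists>E. spanning_tree W E \<and> (\<Sum>(x, y)\<in>E. tt x y) \<le> arrival tt p b - arrival tt p a"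
  using assms
proof (induction b arbitrary: W rule: less_induct)
  case (less b)
  have "a \<le> b"
    using less.prems by fastforce
  have "finite W"
    using less.prems(1) finite_subset by blast
  define W' where "W' = W - {p b}"
  show ?case
  proof (cases "W' = {}")
    case True
    then have "W = {p b}"
      using less.prems(2) unfolding W'_def by blast
    then show ?thesis
      using spanning_tree_singleton arrival_mono[OF \<open>a \<le> b\<close>] by (intro exI[of _ "{}"]) simp
  next
    case False
    obtain c where c: "c \<in> {a..b}" "p c \<in> W'" "W' \<subseteq> p ` {a..c}"
      using last_visit[of W' p a b] False less.prems(1) unfolding W'_def by blast
    then have "c < b"
      unfolding W'_def by (metis DiffE atLeastAtMost_iff le_neq_implies_less singletonI)
    obtain E' where E': "spanning_tree W' E'" "(\<Sum>(x, y)\<in>E'. tt x y) \<le> arrival tt p c - arrival tt p a"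
      using less.IH[OF \<open>c < b\<close> c(3)] False by blast
    have "finite W'"
      using \<open>finite W\<close> unfolding W'_def by simp
    show ?thesis
    proof (cases "p b \<in> W")
      case True
      let ?E = "insert (min (p c) (p b), max (p c) (p b)) E'"
      have "p c \<noteq> p b" "p b \<notin> W'"
        using c(2) unfolding W'_def by auto
      then have edge: "tt (min (p c) (p b)) (max (p c) (p b)) \<le> arrival tt p b - arrival tt p c"
        using tt_le_arrival_diff[of c b] tt_sym[OF walk_in walk_in, of b c] \<open>c < b\<close>
        by (cases "p c \<le> p b") (auto simp: min_def max_def)
      have "W = insert (p b) W'"
        using True unfolding W'_def by blast
      moreover have "spanning_tree (insert (p b) W') ?E"
        using spanning_tree_insert[OF \<open>finite W'\<close> E'(1) c(2) \<open>p b \<notin> W'\<close>] .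
      moreover have "(\<Sum>(x, y)\<in>?E. tt x y) \<le> arrival tt p b - arrival tt p a"
        using sum_spanning_tree_insert[OF E'(1) \<open>finite W'\<close> \<open>p b \<notin> W'\<close>, of tt "p c"] edge E'(2)
        by linarith
      ultimately show ?thesis by blast
    next
      case False
      then have "W = W'"
        unfolding W'_def by blast
      then show ?thesis
        using E' arrival_mono[of c b] \<open>c < b\<close> by (intro exI[of _ E']) simp
    qed
  qed
qed

lemma MST_le_of_recent_cuts:
  assumes W: "finite W" "W \<noteq> {}"
    and recent: "\<And>i. i \<in> W \<Longrightarrow> \<tau> - last_cut tt p i \<tau> \<le> D" and "D < \<tau>"
  shows "MST tt W \<le> D"
proof (rule field_le_epsilon)
  fix e :: real assume "0 < e"
  define \<epsilon> where "\<epsilon> = min e (\<tau> - D)"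
  have "0 < \<epsilon>" "\<epsilon> \<le> \<tau> - D"
    using \<open>0 < e\<close> \<open>D < \<tau>\<close> unfolding \<epsilon>_def by auto
  have "\<exists>k. p k = i \<and> \<tau> - D - \<epsilon> < arrival tt p k \<and> arrival tt p k \<le> \<tau>" if "i \<in> W" for i
    using cut_after_less_last_cut[of "\<tau> - D - \<epsilon>"] recent[OF that] \<open>0 < \<epsilon>\<close> \<open>\<epsilon> \<le> \<tau> - D\<close> by simp
  then obtain K where K: "\<And>i. i \<in> W \<Longrightarrow> p (K i) = i \<and> \<tau> - D - \<epsilon> < arrival tt p (K i) \<and> arrival tt p (K i) \<le> \<tau>"
    by metis
  define a where "a = Min (K ` W)"
  define b where "b = Max (K ` W)"
  have "a \<in> K ` W" "b \<in> K ` W"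
    using W unfolding a_def b_def by auto
  have "W \<subseteq> p ` {a..b}"
  proof
    fix i assume "i \<in> W"
    then have "K i \<in> {a..b}"
      using W unfolding a_def b_def by auto
    then show "i \<in> p ` {a..b}"
      using K[OF \<open>i \<in> W\<close>] by force
  qed
  then obtain E where E: "spanning_tree W E" "(\<Sum>(x, y)\<in>E. tt x y) \<le> arrival tt p b - arrival tt p a"
    using spanning_tree_along_walk W(2) by blast
  moreover have "arrival tt p b - arrival tt p a < D + \<epsilon>"
  proof -
    obtain i j where "i \<in> W" "a = K i" "j \<in> W" "b = K j"
      using \<open>a \<in> K ` W\<close> \<open>b \<in> K ` W\<close> by blast
    then have "\<tau> - D - \<epsilon> < arrival tt p a" "arrival tt p b \<le> \<tau>"
      using K by blast+
    then show ?thesis by linarith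
  qed
  moreover have "\<epsilon> \<le> e"
    unfolding \<epsilon>_def by simp
  ultimately show "MST tt W \<le> D + e"
    using MST_le[OF W(1) E(1), of tt] E(2) by linarith
qed

end

lemma metric_walk_schedule:
  assumes "bgt_instance n h tt" "schedule n p"
  shows "metric_walk n tt p"
proof unfold_locales
  show "p j < n" "p (Suc j) \<noteq> p j" for j
    using assms(2) unfolding schedule_def by auto
  fix i j k assume "i < n" "j < n"
  then show "i \<noteq> j \<Longrightarrow> 0 < tt i j" "i \<noteq> j \<Longrightarrow> tt i j = tt j i"
    using assms(1) unfolding bgt_instance_def by auto
  show "k < n \<Longrightarrow> i \<noteq> j \<Longrightarrow> j \<noteq> k \<Longrightarrow> i \<noteq> k \<Longrightarrow> tt i k \<le> tt i j + tt j k"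
    using assms(1) \<open>i < n\<close> \<open>j < n\<close> unfolding bgt_instance_def by blast
qed

theorem lemma4:
  fixes n :: nat and h :: "nat \<Rightarrow> real" and tt :: "nat \<Rightarrow> nat \<Rightarrow> real"
    and p :: "nat \<Rightarrow> nat" and W :: "nat set"
  assumes "bgt_instance n h tt"
    and "schedule n p"
    and "W \<subseteq> {..<n}" and "W \<noteq> {}"
  shows "MH n h tt p \<ge> ereal (h_min h W * MST tt W)"
proof (rule ereal_le_real)
  fix X assume MH: "MH n h tt p \<le> ereal X"
  interpret metric_walk n tt p
    using assms(1,2) by (rule metric_walk_schedule)
  have "finite W"
    using assms(3) finite_subset by blast
  have h_min: "0 < h_min h W" "\<And>i. i \<in> W \<Longrightarrow> h_min h W \<le> h i"
    using assms(1,3,4) \<open>finite W\<close> unfolding bgt_instance_def h_min_def by auto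
  define D where "D = X / h_min h W"
  define \<tau> where "\<tau> = max 0 D + 1"
  have "\<tau> - last_cut tt p i \<tau> \<le> D" if "i \<in> W" for i
    using time_since_cut_le[OF MH _ _ h_min(1) h_min(2)[OF that]] that assms(3)
    unfolding D_def \<tau>_def by auto
  moreover have "D < \<tau>"
    unfolding \<tau>_def by simp
  ultimately have "MST tt W \<le> D"
    by (rule MST_le_of_recent_cuts[OF \<open>finite W\<close> assms(4)])
  then show "ereal (h_min h W * MST tt W) \<le> ereal X"
    using h_min(1) unfolding D_def by (simp add: pos_le_divide_eq mult.commute)
qed

end
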